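(* Let $r\ge1$ and $G\subset\mathbb{Z}_2^r$ a subgroup with $1^r\in G$, and let $S_G$ be as below. Then $Z_{S_G}:=\sum_{\mu}\dim(S_G)_\mu\,\theta_\mu=\sum_{d\in D_G}\sum_{\alpha\in C_G}2^{-|d|_l}\theta_{(d,d_\perp\alpha)}$; in particular $\dim(S_G)_{(d,d_\perp\alpha)}=[C_G^d:\Delta^d]=2^{-|d|_l}\#C_G^d$ for any $d\in D_G$, $\alpha\in C_G$, where $C_G^d=C_G\cap\mathbb{Z}_2^d$.
   Context: Identify $\mathrm{IS}=\{0,\frac12,\frac1{16}\}$ with $\{(d,c)\in\mathbb{Z}_2^2:dc=0\}$ via $0\leftrightarrow(0,0)$, $\frac12\leftrightarrow(0,1)$, $\frac1{16}\leftrightarrow(1,0)$, and componentwise $\mathrm{IS}^{(r,r)}=\mathrm{IS}^r\times\mathrm{IS}^r$ with pairs $(d,c)\in(\mathbb{Z}_2^{r+r})^2$ with $dc=0$ (componentwise product). $\theta_\mu$ ($\mu\in\mathrm{IS}^{(r,r)}$) is a formal basis of a vector space. For $c\in\mathbb{Z}_2^{r+r}$, $|c|_l,|c|_r$ are numbers of ones among first/last $r$ coordinates, $|c|=|c|_l-|c|_r$, $d_\perp=1^{2r}+d$, $\mathbb{Z}_2^d=\{\alpha:d\alpha=\alpha\}$; $A^\perp=\{\beta:|\beta a|\in2\mathbb{Z}\ \forall a\in A\}$. Construction: $\Delta(g)=(g,g)$; $D_G=\Delta G$, $C_G=D_G^\perp$. Let $C^{\rm even}_{r,r}=\{\alpha:|\alpha|\in2\mathbb{Z}\}$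 with ordered basis $(v_1,\dots,v_{2r-1})=(\Delta e_1,\dots,\Delta e_r,\tilde e_1-\tilde e_2,\dots,\tilde e_{r-1}-\tilde e_r)$, $\tilde e_i=(e_i,0)$; $\varepsilon$ is the bimultiplicative map to $\{\pm1\}$ with $\varepsilon(v_i,v_i)=(-1)^{|v_i|/2}$, $\varepsilon(v_i,v_j)=1$ ($i<j$), $(-1)^{|v_iv_j|}$ ($i>j$). $\mathbb{C}[\hat C_G]$ has basis $e_\alpha$ ($\alpha\in C_G$), $e_\alpha e_\beta=\varepsilon(\alpha,\beta)e_{\alpha+\beta}$. For $d\in\Delta\mathbb{Z}_2^r$, $\Delta^d=\mathbb{Z}_2^d\cap\Delta\mathbb{Z}_2^r$, and $\{e_\gamma\}_{\gamma\in\Delta^d}$ spans a copy of $\mathbb{C}[\Delta^d]$. For $d\in D_G$, $A_G(d)=\mathbb{C}[\hat C_G]\otimes_{\mathbb{C}[\Delta^d]}\mathbb{C}t_d$ (trivial module), $S_G=\bigoplus_{d\in D_G}A_G(d)$, graded by putting $e_\alpha\cdot t_d$ in degree $(d,d_\perp\alpha)$. *)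

theory Defs
  imports Complex_Main "HOL-Library.Function_Algebras"
begin

section \<open>Binary vectors: Z_2^n identified with subsets of {..<n}\<close>

definition Z2 :: "nat \<Rightarrow> nat set set" where
  "Z2 n = Pow {..<n}"

text \<open>componentwise sum (symmetric difference) and componentwise product (intersection)\<close>
definition vadd :: "nat set \<Rightarrow> nat set \<Rightarrow> nat set" where
  "vadd a b = (a - b) \<union> (b - a)"

definition vmul :: "nat set \<Rightarrow> nat set \<Rightarrow> nat set" where
  "vmul a b = a \<inter> b"

definition wl :: "nat \<Rightarrow> nat set \<Rightarrow> nat" where
  "wl r c = card (c \<inter> {..<r})"

definition wr :: "nat \<Rightarrow> nat set \<Rightarrow> nat" where
  "wr r c = card (c \<inter> {r..<2*r})"

definition wt :: "nat \<Rightarrow> nat set \<Rightarrow> int" where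
  "wt r c = int (wl r c) - int (wr r c)"

definition ones :: "nat \<Rightarrow> nat set" where
  "ones n = {..<n}"

definition dperp :: "nat \<Rightarrow> nat set \<Rightarrow> nat set" where
  "dperp r d = vadd (ones (2*r)) d"

definition Z2sub :: "nat \<Rightarrow> nat set \<Rightarrow> nat set set" where
  "Z2sub r d = {\<alpha> \<in> Z2 (2*r). vmul d \<alpha> = \<alpha>}"

definition perp :: "nat \<Rightarrow> nat set set \<Rightarrow> nat set set" where
  "perp r A = {\<beta> \<in> Z2 (2*r). \<forall>a\<in>A. even (wt r (vmul \<beta> a))}"

definition Delta :: "nat \<Rightarrow> nat set \<Rightarrow> nat set" where
  "Delta r g = g \<union> (\<lambda>i. i + r) ` g"

definition DG :: "nat \<Rightarrow> nat set set \<Rightarrow> nat set set" where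
  "DG r G = Delta r ` G"

definition CG :: "nat \<Rightarrow> nat set set \<Rightarrow> nat set set" where
  "CG r G = perp r (DG r G)"

definition CGd :: "nat \<Rightarrow> nat set set \<Rightarrow> nat set \<Rightarrow> nat set set" where
  "CGd r G d = CG r G \<inter> Z2sub r d"

definition Deltad :: "nat \<Rightarrow> nat set \<Rightarrow> nat set set" where
  "Deltad r d = Z2sub r d \<inter> Delta r ` Z2 r"

definition Ceven :: "nat \<Rightarrow> nat set set" where
  "Ceven r = {\<alpha> \<in> Z2 (2*r). even (wt r \<alpha>)}"

text \<open>Ordered basis (v_1,...,v_{2r-1}) of C^even, indexed from 0:
  v_i = Delta e_i for i < r, and v_{r+j} = e~_j - e~_{j+1} for j < r-1
  (coordinates 0-based; over Z_2, e~_j - e~_{j+1} = {j, j+1}).\<close>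
definition vbas :: "nat \<Rightarrow> nat \<Rightarrow> nat set" where
  "vbas r i = (if i < r then Delta r {i} else {i - r, i - r + 1})"

definition epsb :: "nat \<Rightarrow> nat \<Rightarrow> nat \<Rightarrow> complex" where
  "epsb r i j =
     (if i = j then (-1) powi (wt r (vbas r i) div 2)
      else if i < j then 1
      else (-1) powi (wt r (vmul (vbas r i) (vbas r j))))"

text \<open>The bimultiplicative map epsilon on C^even with prescribed values on the basis.
  Convention: it is set to 1 outside C^even x C^even (only used on C_G, a subset of C^even).\<close>
definition eps :: "nat \<Rightarrow> nat set \<Rightarrow> nat set \<Rightarrow> complex" where
  "eps r = (THE f.
      (\<forall>\<alpha> \<beta>. (\<alpha> \<notin> Ceven r \<or> \<beta> \<notin> Ceven r) \<longrightarrow> f \<alpha> \<beta> = 1) \<and>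
      (\<forall>\<alpha>\<in>Ceven r. \<forall>\<beta>\<in>Ceven r. \<forall>\<gamma>\<in>Ceven r.
          f (vadd \<alpha> \<beta>) \<gamma> = f \<alpha> \<gamma> * f \<beta> \<gamma> \<and> f \<alpha> (vadd \<beta> \<gamma>) = f \<alpha> \<beta> * f \<alpha> \<gamma>) \<and>
      (\<forall>i<2*r-1. \<forall>j<2*r-1. f (vbas r i) (vbas r j) = epsb r i j))"

section \<open>The twisted group algebra C[hat C_G] (elements: coefficient functions supported on C_G)\<close>

definition ebas :: "nat set \<Rightarrow> nat set \<Rightarrow> complex" where
  "ebas \<alpha> = (\<lambda>\<beta>. if \<beta> = \<alpha> then 1 else 0)"

definition twmul :: "nat \<Rightarrow> nat set set \<Rightarrow> (nat set \<Rightarrow> complex) \<Rightarrow> (nat set \<Rightarrow> complex)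
    \<Rightarrow> (nat set \<Rightarrow> complex)" where
  "twmul r G x y = (\<lambda>\<beta>. \<Sum>\<alpha>\<in>CG r G. \<Sum>\<alpha>'\<in>CG r G.
       if vadd \<alpha> \<alpha>' = \<beta> then eps r \<alpha> \<alpha>' * x \<alpha> * y \<alpha>' else 0)"

definition suppIn :: "('a \<Rightarrow> complex) \<Rightarrow> 'a set \<Rightarrow> bool" where
  "suppIn x A \<longleftrightarrow> (\<forall>p. x p \<noteq> 0 \<longrightarrow> p \<in> A)"

definition cscale :: "complex \<Rightarrow> ('a \<Rightarrow> complex) \<Rightarrow> ('a \<Rightarrow> complex)" where
  "cscale c f = (\<lambda>p. c * f p)"

text \<open>Free space with basis e_alpha (x) t_d, (d,alpha) in D_G x C_G; i.e. the direct sum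
  over d in D_G of C[hat C_G] (x)_C C t_d.  Elements are functions on pairs (d,alpha).\<close>
definition Sfree :: "nat \<Rightarrow> nat set set \<Rightarrow> (nat set \<times> nat set \<Rightarrow> complex) set" where
  "Sfree r G = {f. suppIn f (DG r G \<times> CG r G)}"

text \<open>Relations defining the tensor product over C[Delta^d] with the trivial module C t_d:
  (x e_gamma) (x) t_d - x (x) t_d, for x in C[hat C_G], gamma in Delta^d, d in D_G.\<close>
definition Srelgen :: "nat \<Rightarrow> nat set set \<Rightarrow> (nat set \<times> nat set \<Rightarrow> complex) set" where
  "Srelgen r G = {(\<lambda>(d', \<beta>). if d' = d then (twmul r G x (ebas \<gamma>) \<beta> - x \<beta>) else 0)
       | d x \<gamma>. d \<in> DG r G \<and> suppIn x (CG r G) \<and> \<gamma> \<in> Deltad r d}"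

definition Srel :: "nat \<Rightarrow> nat set set \<Rightarrow> (nat set \<times> nat set \<Rightarrow> complex) set" where
  "Srel r G = module.span cscale (Srelgen r G)"

definition Shom :: "nat \<Rightarrow> nat set set \<Rightarrow> nat set \<times> nat set \<Rightarrow> (nat set \<times> nat set \<Rightarrow> complex) set" where
  "Shom r G \<mu> = module.span cscale
      {(\<lambda>p. if p = (d, \<alpha>) then 1 else 0) | d \<alpha>.
         d \<in> DG r G \<and> \<alpha> \<in> CG r G \<and> (d, vmul (dperp r d) \<alpha>) = \<mu>}"

text \<open>dim (S_G)_mu: dimension of the image of the degree-mu component in the quotient
  S_G = Sfree / Srel, i.e. dim((Shom + Srel)/Srel) = dim(Shom + Srel) - dim Srel.\<close>
definition dimSG :: "nat \<Rightarrow> nat set set \<Rightarrow> nat set \<times> nat set \<Rightarrow> nat" where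
  "dimSG r G \<mu> = vector_space.dim cscale (Shom r G \<mu> \<union> Srel r G)
                 - vector_space.dim cscale (Srel r G)"

definition ISrr :: "nat \<Rightarrow> (nat set \<times> nat set) set" where
  "ISrr r = {(d, c). d \<in> Z2 (2*r) \<and> c \<in> Z2 (2*r) \<and> vmul d c = {}}"

definition is_subgroup_Z2 :: "nat \<Rightarrow> nat set set \<Rightarrow> bool" where
  "is_subgroup_Z2 r G \<longleftrightarrow> G \<subseteq> Z2 r \<and> {} \<in> G \<and> (\<forall>g\<in>G. \<forall>h\<in>G. vadd g h \<in> G)"

end

theory Submission
  imports Defs
begin

text \<open>The cocycle \<open>\<epsilon>\<close> is determined by its values on the basis \<open>(v\<^sub>i)\<close> of \<open>C\<^sup>e\<^sup>v\<^sup>e\<^sup>n\<close>, so it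
  equals an explicit sign \<open>(-1)\<^bsup>B(a,b)\<^esup>\<close> with \<open>B\<close> bilinear mod 2 and \<open>B(a,b) = 0\<close> for
  \<open>a \<in> \<Delta>Z\<^sub>2\<^sup>r\<close>. Hence in \<open>A\<^sub>G(d)\<close> one has \<open>e\<^bsub>a+h\<^esub> t\<^sub>d = \<plusminus>e\<^sub>a t\<^sub>d\<close> for \<open>h \<in> \<Delta>\<^sup>d\<close>, so the degree
  \<open>(d, d\<^sub>\<bottom>\<alpha>)\<close> part is spanned by one vector \<open>e\<^sub>a t\<^sub>d\<close> per coset \<open>a + \<Delta>\<^sup>d\<close> of \<open>C\<^sub>G\<close> with
  \<open>d\<^sub>\<bottom>a = d\<^sub>\<bottom>\<alpha>\<close>. These vectors stay independent modulo the relations: for each coset, the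
  signed sum of coefficients over the coset kills every relation and is dual to the chosen
  vectors. Translation by \<open>\<alpha>\<close> maps these cosets onto the cosets of \<open>\<Delta>\<^sup>d\<close> in \<open>C\<^sub>G\<^sup>d\<close>, and
  \<open>|\<Delta>\<^sup>d| = 2\<^bsup>|d|\<^sub>l\<^esup>\<close>.\<close>

section \<open>Symmetric difference and parity\<close>

lemma vadd_comm: "vadd a b = vadd b a"
  by (auto simp: vadd_def)

lemma vadd_assoc: "vadd (vadd a b) c = vadd a (vadd b c)"
  by (auto simp: vadd_def)

lemma vadd_self [simp]: "vadd a a = {}"
  by (auto simp: vadd_def)

lemma vadd_empty [simp]: "vadd a {} = a" "vadd {} a = a"
  by (auto simp: vadd_def)

lemma vadd_vadd_cancel [simp]: "vadd a (vadd a b) = b"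
  by (auto simp: vadd_def)

lemma vadd_eq_iff: "vadd a b = c \<longleftrightarrow> a = vadd c b"
  by (auto simp: vadd_def)

lemma inj_on_vadd: "inj_on (vadd a) A"
  by (metis inj_onI vadd_vadd_cancel)

lemma card_sym_diff:
  assumes "finite A" "finite B"
  shows "card (sym_diff A B) + 2 * card (A \<inter> B) = card A + card B"
proof -
  have "card (sym_diff A B) = card (A - B) + card (B - A)"
    using assms by (intro card_Un_disjoint) auto
  moreover have "card A = card (A \<inter> B) + card (A - B)" "card B = card (B \<inter> A) + card (B - A)"
    using assms card_Int_Diff by blast+
  ultimately show ?thesis by (simp add: Int_commute)
qed

lemma even_card_sym_diff_iff:
  assumes "finite A" "finite B"
  shows "even (card (sym_diff A B)) \<longleftrightarrow> (even (card A) \<longleftrightarrow> even (card B))"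
  using card_sym_diff[OF assms] by (metis even_add even_mult_iff even_numeral)

lemma minus_one_power_card_sym_diff:
  assumes "finite A" "finite B"
  shows "(-1::'a::ring_1) ^ card (sym_diff A B) = (-1) ^ card A * (-1) ^ card B"
proof -
  have "(-1::'a) ^ card A * (-1) ^ card B = (-1) ^ (card (sym_diff A B) + 2 * card (A \<inter> B))"
    unfolding card_sym_diff[OF assms] by (simp add: power_add)
  then show ?thesis by (simp add: power_add power_mult)
qed

lemma card_eq_wl_add_wr:
  assumes "a \<subseteq> {..<2*r}"
  shows "card a = wl r a + wr r a"
proof -
  have "a = (a \<inter> {..<r}) \<union> (a \<inter> {r..<2*r})"
    using assms by auto
  then have "card a = card ((a \<inter> {..<r}) \<union> (a \<inter> {r..<2*r}))"
    by simp
  also have "\<dots> = wl r a + wr r a"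
    unfolding wl_def wr_def by (rule card_Un_disjoint) auto
  finally show ?thesis .
qed

lemma even_wt_iff: "a \<subseteq> {..<2*r} \<Longrightarrow> even (wt r a) \<longleftrightarrow> even (card a)"
  unfolding wt_def card_eq_wl_add_wr[of a r] by (metis even_diff even_of_nat of_nat_add)

lemma Ceven_iff: "a \<in> Ceven r \<longleftrightarrow> a \<subseteq> {..<2*r} \<and> even (card a)"
  by (auto simp: Ceven_def Z2_def even_wt_iff)

lemma Ceven_vadd: "a \<in> Ceven r \<Longrightarrow> b \<in> Ceven r \<Longrightarrow> vadd a b \<in> Ceven r"
proof -
  assume "a \<in> Ceven r" "b \<in> Ceven r"
  then have "a \<subseteq> {..<2*r}" "b \<subseteq> {..<2*r}" "even (card a)" "even (card b)"
    by (auto simp: Ceven_iff)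
  moreover have "finite a" "finite b"
    using calculation(1,2) finite_subset by auto
  ultimately show ?thesis
    unfolding Ceven_iff vadd_def using even_card_sym_diff_iff by auto
qed

section \<open>The cocycle \<open>\<epsilon>\<close>\<close>

definition right_half :: "nat \<Rightarrow> nat set \<Rightarrow> nat set" where
  "right_half r a = {i. i < r \<and> i + r \<in> a}"

definition diag_defect :: "nat \<Rightarrow> nat set \<Rightarrow> nat set" where
  "diag_defect r a = vadd (a \<inter> {..<r}) (right_half r a)"

text \<open>Every \<open>a \<subseteq> {..<2*r}\<close> splits as \<open>\<Delta>(right_half r a) + diag_defect r a\<close> with
  \<open>diag_defect r a \<subseteq> {..<r}\<close>. The exponent below is additive mod 2 in each argument, vanishes when
  the first argument lies in \<open>\<Delta>Z\<^sub>2\<^sup>r\<close>, and its ordered-pair term produces the signs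
  \<open>\<epsilon>(v\<^sub>i, v\<^sub>i) = -1\<close> and \<open>\<epsilon>(v\<^sub>i, v\<^sub>j) = (-1)\<^bsup>|v\<^sub>iv\<^sub>j|\<^esup>\<close> (\<open>i > j\<close>) on the vectors \<open>e\<^sub>k + e\<^sub>k\<^sub>+\<^sub>1\<close>.\<close>
definition cocycle_exponent :: "nat \<Rightarrow> nat set \<Rightarrow> nat set \<Rightarrow> nat" where
  "cocycle_exponent r a b = card (diag_defect r a \<inter> right_half r b)
     + card ((diag_defect r a \<times> diag_defect r b) \<inter> {(p, q). q < p})"

definition eps_explicit :: "nat \<Rightarrow> nat set \<Rightarrow> nat set \<Rightarrow> complex" where
  "eps_explicit r a b = (if a \<in> Ceven r \<and> b \<in> Ceven r then (-1) ^ cocycle_exponent r a b else 1)"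

lemma right_half_subset: "right_half r a \<subseteq> {..<r}"
  by (auto simp: right_half_def)

lemma diag_defect_subset: "diag_defect r a \<subseteq> {..<r}"
  by (auto simp: diag_defect_def vadd_def right_half_def)

lemma finite_right_half [simp]: "finite (right_half r a)"
  using right_half_subset finite_subset by blast

lemma finite_diag_defect [simp]: "finite (diag_defect r a)"
  using diag_defect_subset finite_subset by blast

lemma right_half_vadd: "right_half r (vadd a b) = vadd (right_half r a) (right_half r b)"
  by (auto simp: right_half_def vadd_def)

lemma diag_defect_vadd: "diag_defect r (vadd a b) = vadd (diag_defect r a) (diag_defect r b)"
  by (auto simp: diag_defect_def right_half_def vadd_def)

lemma eps_explicit_vadd_left:
  assumes "a \<in> Ceven r" "b \<in> Ceven r" "c \<in> Ceven r"
  shows "eps_explicit r (vadd a b) c = eps_explicit r a c * eps_explicit r b c"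
proof -
  let ?D = "diag_defect r" and ?T = "{(p::nat, q). q < p}"
  have "?D (vadd a b) \<inter> right_half r c = sym_diff (?D a \<inter> right_half r c) (?D b \<inter> right_half r c)"
    "(?D (vadd a b) \<times> ?D c) \<inter> ?T = sym_diff ((?D a \<times> ?D c) \<inter> ?T) ((?D b \<times> ?D c) \<inter> ?T)"
    unfolding diag_defect_vadd by (auto simp: vadd_def)
  then have "(-1::complex) ^ cocycle_exponent r (vadd a b) c
      = (-1) ^ cocycle_exponent r a c * (-1) ^ cocycle_exponent r b c"
    unfolding cocycle_exponent_def power_add
    by (simp add: minus_one_power_card_sym_diff ac_simps)
  then show ?thesis
    using assms Ceven_vadd[OF assms(1,2)] by (simp add: eps_explicit_def)
qed

lemma eps_explicit_vadd_right:
  assumes "a \<in> Ceven r" "b \<in> Ceven r" "c \<in> Ceven r"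
  shows "eps_explicit r c (vadd a b) = eps_explicit r c a * eps_explicit r c b"
proof -
  let ?D = "diag_defect r" and ?T = "{(p::nat, q). q < p}"
  have "?D c \<inter> right_half r (vadd a b) = sym_diff (?D c \<inter> right_half r a) (?D c \<inter> right_half r b)"
    "(?D c \<times> ?D (vadd a b)) \<inter> ?T = sym_diff ((?D c \<times> ?D a) \<inter> ?T) ((?D c \<times> ?D b) \<inter> ?T)"
    unfolding diag_defect_vadd right_half_vadd by (auto simp: vadd_def)
  then have "(-1::complex) ^ cocycle_exponent r c (vadd a b)
      = (-1) ^ cocycle_exponent r c a * (-1) ^ cocycle_exponent r c b"
    unfolding cocycle_exponent_def power_add
    by (simp add: minus_one_power_card_sym_diff ac_simps)
  then show ?thesis
    using assms Ceven_vadd[OF assms(1,2)] by (simp add: eps_explicit_def)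
qed

lemma diag_defect_Delta: "g \<subseteq> {..<r} \<Longrightarrow> diag_defect r (Delta r g) = {}"
  by (auto simp: diag_defect_def right_half_def Delta_def vadd_def)

lemma eps_explicit_Delta_left: "g \<subseteq> {..<r} \<Longrightarrow> eps_explicit r (Delta r g) b = 1"
  by (simp add: eps_explicit_def cocycle_exponent_def diag_defect_Delta)

lemma eps_explicit_empty_right [simp]: "eps_explicit r a {} = 1"
  by (simp add: eps_explicit_def cocycle_exponent_def right_half_def diag_defect_def)

lemma eps_explicit_square [simp]: "eps_explicit r a b * eps_explicit r a b = 1"
  by (simp add: eps_explicit_def power_mult_distrib[symmetric] power_mult[symmetric])

lemma Delta_singleton: "Delta r {i} = {i, i + r}"
  by (auto simp: Delta_def)

lemma vbas_low: "i < r \<Longrightarrow> vbas r i = {i, i + r}"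
  by (simp add: vbas_def Delta_singleton)

lemma vbas_high: "r \<le> i \<Longrightarrow> vbas r i = {i - r, i - r + 1}"
  by (simp add: vbas_def)

lemma vbas_Ceven: "i < 2*r - 1 \<Longrightarrow> vbas r i \<in> Ceven r"
  by (cases "i < r") (auto simp: vbas_low vbas_high Ceven_iff)

lemma wt_eq_card: "x \<subseteq> {..<r} \<Longrightarrow> wt r x = int (card x)"
proof -
  assume "x \<subseteq> {..<r}"
  then have "x \<inter> {..<r} = x" "x \<inter> {r..<2*r} = {}"
    by auto
  then show ?thesis
    by (simp add: wt_def wl_def wr_def)
qed

lemma wt_Delta_singleton: "i < r \<Longrightarrow> wt r {i, i + r} = 0"
proof -
  assume "i < r"
  then have "{i, i + r} \<inter> {..<r} = {i}" "{i, i + r} \<inter> {r..<2*r} = {i + r}"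
    by auto
  then show ?thesis
    by (simp add: wt_def wl_def wr_def)
qed

lemma epsb_low: "i < r \<Longrightarrow> epsb r i j = 1"
proof -
  assume i: "i < r"
  have "vmul (vbas r i) (vbas r j) = {}" if "j < i"
    using i that by (auto simp: vbas_low vmul_def)
  then show ?thesis
    using i by (auto simp: epsb_def vbas_low wt_Delta_singleton wt_def wl_def wr_def)
qed

lemma eps_explicit_basis_low:
  "i < r \<Longrightarrow> eps_explicit r (vbas r i) (vbas r j) = epsb r i j"
  by (simp add: epsb_low vbas_def eps_explicit_Delta_left)

lemma eps_explicit_basis_high_low:
  assumes i: "r \<le> i" "i < 2*r - 1" and j: "j < r"
  shows "eps_explicit r (vbas r i) (vbas r j) = epsb r i j"
proof -
  define k where "k = i - r"
  have k: "k + 1 < r" "i = r + k"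
    using i by (auto simp: k_def)
  have vi: "vbas r i = {k, k + 1}" and vj: "vbas r j = {j, j + r}"
    using i j by (simp_all add: vbas_high vbas_low k_def)
  have "diag_defect r {k, k + 1} = {k, k + 1}" "diag_defect r {j, j + r} = {}"
    "right_half r {j, j + r} = {j}"
    using k j by (auto simp: diag_defect_def right_half_def vadd_def)
  then have "cocycle_exponent r (vbas r i) (vbas r j) = card ({k, k + 1} \<inter> {j})"
    unfolding cocycle_exponent_def vi vj by simp
  moreover have "vmul (vbas r i) (vbas r j) = {k, k + 1} \<inter> {j}"
    unfolding vi vj using k(1) by (auto simp: vmul_def)
  moreover have "wt r ({k, k + 1} \<inter> {j}) = int (card ({k, k + 1} \<inter> {j}))"
    using k by (intro wt_eq_card) auto
  ultimately show ?thesis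
    using vbas_Ceven i j k(2) by (simp add: eps_explicit_def epsb_def power_int_of_nat)
qed

lemma eps_explicit_basis_high_high:
  assumes i: "r \<le> i" "i < 2*r - 1" and j: "r \<le> j" "j < 2*r - 1"
  shows "eps_explicit r (vbas r i) (vbas r j) = epsb r i j"
proof -
  define k l where "k = i - r" and "l = j - r"
  have kl: "k + 1 < r" "i = r + k" "l + 1 < r" "j = r + l"
    using i j by (auto simp: k_def l_def)
  have vi: "vbas r i = {k, k + 1}" and vj: "vbas r j = {l, l + 1}"
    using i j by (simp_all add: vbas_high k_def l_def)
  have "diag_defect r {k, k + 1} = {k, k + 1}" "diag_defect r {l, l + 1} = {l, l + 1}"
    "right_half r {l, l + 1} = {}"
    using kl by (auto simp: diag_defect_def right_half_def vadd_def)
  then have exp: "cocycle_exponent r (vbas r i) (vbas r j)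
      = card (({k, k + 1} \<times> {l, l + 1}) \<inter> {(p, q). q < p})"
    unfolding cocycle_exponent_def vi vj by simp
  have eps: "eps_explicit r (vbas r i) (vbas r j) = (-1) ^ cocycle_exponent r (vbas r i) (vbas r j)"
    using vbas_Ceven i j by (simp add: eps_explicit_def)
  consider "k = l" | "k < l" | "k = l + 1" | "l + 1 < k"
    by linarith
  then show ?thesis
  proof cases
    case 1
    then have "({k, k + 1} \<times> {l, l + 1}) \<inter> {(p, q). q < p} = {(k + 1, k)}"
      by auto
    moreover have "wt r (vbas r i) = 2"
      unfolding vi using kl by (subst wt_eq_card) auto
    ultimately show ?thesis
      using 1 kl eps exp by (simp add: epsb_def)
  next
    case 2
    then have "({k, k + 1} \<times> {l, l + 1}) \<inter> {(p, q). q < p} = {}"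
      by auto
    then show ?thesis
      using 2 kl eps exp by (simp add: epsb_def)
  next
    case 3
    then have "({k, k + 1} \<times> {l, l + 1}) \<inter> {(p, q). q < p} = {(l + 1, l), (l + 2, l), (l + 2, l + 1)}"
      by auto
    moreover have "vmul (vbas r i) (vbas r j) = {l + 1}"
      using 3 by (auto simp: vi vj vmul_def)
    moreover have "wt r {l + 1} = 1"
      using kl by (subst wt_eq_card) auto
    ultimately show ?thesis
      using 3 kl eps exp by (simp add: epsb_def)
  next
    case 4
    then have "({k, k + 1} \<times> {l, l + 1}) \<inter> {(p, q). q < p} = {k, k + 1} \<times> {l, l + 1}"
      by auto
    moreover have "card ({k, k + 1} \<times> {l, l + 1}) = 4"
      using 4 by (simp add: card_cartesian_product)
    moreover have "vmul (vbas r i) (vbas r j) = {}"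
      using 4 by (auto simp: vi vj vmul_def)
    ultimately show ?thesis
      using 4 kl eps exp by (simp add: epsb_def wt_def wl_def wr_def)
  qed
qed

lemma eps_explicit_basis:
  assumes "i < 2*r - 1" "j < 2*r - 1"
  shows "eps_explicit r (vbas r i) (vbas r j) = epsb r i j"
  using assms eps_explicit_basis_low eps_explicit_basis_high_low eps_explicit_basis_high_high
  by (metis not_le)

inductive_set basis_span :: "nat \<Rightarrow> nat set set" for r where
  basis: "i < 2*r - 1 \<Longrightarrow> vbas r i \<in> basis_span r"
| vadd: "a \<in> basis_span r \<Longrightarrow> b \<in> basis_span r \<Longrightarrow> vadd a b \<in> basis_span r"

lemma basis_span_subset_Ceven: "basis_span r \<subseteq> Ceven r"
proof
  fix a assume "a \<in> basis_span r"
  then show "a \<in> Ceven r"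
    by induction (auto intro: vbas_Ceven Ceven_vadd)
qed

lemma empty_in_basis_span: "r \<ge> 1 \<Longrightarrow> {} \<in> basis_span r"
  using basis_span.vadd[OF basis_span.basis basis_span.basis, of 0 r 0] by simp

lemma Delta_in_basis_span:
  assumes r: "r \<ge> 1" and g: "g \<subseteq> {..<r}"
  shows "Delta r g \<in> basis_span r"
proof -
  have "finite g"
    using g finite_subset by blast
  then show ?thesis
    using g
  proof (induction g rule: finite_induct)
    case empty
    then show ?case
      using empty_in_basis_span[OF r] by (simp add: Delta_def)
  next
    case (insert i g)
    have "Delta r (insert i g) = vadd (vbas r i) (Delta r g)"
      using insert by (auto simp: vbas_def Delta_def vadd_def)
    moreover have "vbas r i \<in> basis_span r"
      using insert r by (intro basis_span.basis) auto
    ultimately show ?case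
      using insert by (auto intro: basis_span.vadd)
  qed
qed

text \<open>If \<open>n - 1 \<in> x\<close>, adding \<open>v\<^bsub>r+n-2\<^esub> = {n - 2, n - 1}\<close> leaves an even subset of \<open>{..<n - 1}\<close>.\<close>
lemma even_subset_in_basis_span:
  assumes r: "r \<ge> 1"
  shows "n \<le> r \<Longrightarrow> x \<subseteq> {..<n} \<Longrightarrow> even (card x) \<Longrightarrow> x \<in> basis_span r"
proof (induction n arbitrary: x)
  case 0
  then show ?case
    using empty_in_basis_span[OF r] by simp
next
  case (Suc n)
  show ?case
  proof (cases "n \<in> x")
    case False
    then have "x \<subseteq> {..<n}"
      using Suc.prems(2) by (auto simp: less_Suc_eq)
    then show ?thesis
      using Suc by simp
  next
    case True
    have "n \<noteq> 0"
    proof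
      assume "n = 0"
      then have "x = {0}"
        using True Suc.prems(2) by auto
      then show False
        using Suc.prems(3) by simp
    qed
    define p where "p = {n - 1, n}"
    have "finite x"
      using Suc.prems(2) finite_subset by blast
    then have "even (card (vadd x p))"
      using Suc.prems(3) \<open>n \<noteq> 0\<close> by (simp add: vadd_def even_card_sym_diff_iff p_def)
    moreover have "vadd x p \<subseteq> {..<n}"
      using Suc.prems(2) True \<open>n \<noteq> 0\<close> by (auto simp: vadd_def p_def)
    ultimately have "vadd x p \<in> basis_span r"
      using Suc by simp
    moreover have "p \<in> basis_span r"
    proof -
      have "vbas r (r + (n - 1)) = p"
        using \<open>n \<noteq> 0\<close> by (simp add: vbas_high p_def)
      moreover have "r + (n - 1) < 2*r - 1"
        using Suc.prems(1) \<open>n \<noteq> 0\<close> by auto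
      ultimately show ?thesis
        using basis_span.basis by metis
    qed
    ultimately show ?thesis
      using basis_span.vadd by (metis vadd_assoc vadd_self vadd_empty(1))
  qed
qed

lemma vadd_Delta_right_half_diag_defect:
  assumes "a \<subseteq> {..<2*r}"
  shows "vadd (Delta r (right_half r a)) (diag_defect r a) = a"
proof -
  have "x \<in> vadd (Delta r (right_half r a)) (diag_defect r a) \<longleftrightarrow> x \<in> a" for x
  proof (cases "x < r")
    case True
    then show ?thesis
      by (auto simp: Delta_def right_half_def diag_defect_def vadd_def)
  next
    case False
    then have "x \<in> Delta r (right_half r a) \<longleftrightarrow> x \<in> a"
      using assms by (auto simp: Delta_def right_half_def image_iff intro!: exI[of _ "x - r"])
    moreover have "x \<notin> diag_defect r a"
      using False diag_defect_subset by blast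
    ultimately show ?thesis
      by (auto simp: vadd_def)
  qed
  then show ?thesis
    by blast
qed

lemma Ceven_subset_basis_span:
  assumes r: "r \<ge> 1"
  shows "Ceven r \<subseteq> basis_span r"
proof
  fix a assume a: "a \<in> Ceven r"
  then have a_sub: "a \<subseteq> {..<2*r}" and "even (card a)"
    by (auto simp: Ceven_iff)
  have "Delta r (right_half r a) \<in> Ceven r"
    using basis_span_subset_Ceven Delta_in_basis_span[OF r right_half_subset] by blast
  then have "vadd (Delta r (right_half r a)) (diag_defect r a) \<in> Ceven r \<longleftrightarrow> diag_defect r a \<in> Ceven r"
    by (metis Ceven_vadd vadd_vadd_cancel)
  then have "even (card (diag_defect r a))"
    using a by (simp add: vadd_Delta_right_half_diag_defect[OF a_sub] Ceven_iff)
  then have "diag_defect r a \<in> basis_span r"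
    using even_subset_in_basis_span[OF r] diag_defect_subset by blast
  then show "a \<in> basis_span r"
    using basis_span.vadd[OF Delta_in_basis_span[OF r right_half_subset]]
    by (metis vadd_Delta_right_half_diag_defect[OF a_sub])
qed

definition eps_axioms :: "nat \<Rightarrow> (nat set \<Rightarrow> nat set \<Rightarrow> complex) \<Rightarrow> bool" where
  "eps_axioms r f \<longleftrightarrow>
      (\<forall>\<alpha> \<beta>. (\<alpha> \<notin> Ceven r \<or> \<beta> \<notin> Ceven r) \<longrightarrow> f \<alpha> \<beta> = 1) \<and>
      (\<forall>\<alpha>\<in>Ceven r. \<forall>\<beta>\<in>Ceven r. \<forall>\<gamma>\<in>Ceven r.
          f (vadd \<alpha> \<beta>) \<gamma> = f \<alpha> \<gamma> * f \<beta> \<gamma> \<and> f \<alpha> (vadd \<beta> \<gamma>) = f \<alpha> \<beta> * f \<alpha> \<gamma>) \<and>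
      (\<forall>i<2*r-1. \<forall>j<2*r-1. f (vbas r i) (vbas r j) = epsb r i j)"

lemma eps_axioms_eps_explicit: "eps_axioms r (eps_explicit r)"
  unfolding eps_axioms_def
  using eps_explicit_vadd_left eps_explicit_vadd_right eps_explicit_basis
  by (auto simp: eps_explicit_def)

lemma eps_axioms_unique:
  assumes r: "r \<ge> 1" and f: "eps_axioms r f" and g: "eps_axioms r g"
  shows "f = g"
proof -
  have on_basis: "f a (vbas r j) = g a (vbas r j)" if "a \<in> basis_span r" "j < 2*r - 1" for a j
    using that
  proof induction
    case (vadd a b)
    then have "a \<in> Ceven r" "b \<in> Ceven r" "vbas r j \<in> Ceven r"
      using basis_span_subset_Ceven vbas_Ceven by auto
    then show ?case
      using vadd f g by (simp add: eps_axioms_def)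
  qed (use f g in \<open>simp add: eps_axioms_def\<close>)
  have on_Ceven: "f a b = g a b" if "b \<in> basis_span r" "a \<in> Ceven r" for a b
    using that
  proof induction
    case (basis j)
    then show ?case
      using on_basis Ceven_subset_basis_span[OF r] by blast
  next
    case (vadd b c)
    then have "b \<in> Ceven r" "c \<in> Ceven r"
      using basis_span_subset_Ceven by auto
    then show ?case
      using vadd f g by (simp add: eps_axioms_def)
  qed
  show ?thesis
  proof (intro ext)
    fix a b
    show "f a b = g a b"
      using on_Ceven Ceven_subset_basis_span[OF r] f g
      by (cases "a \<in> Ceven r \<and> b \<in> Ceven r") (auto simp: eps_axioms_def)
  qed
qed

lemma eps_eq_eps_explicit: "r \<ge> 1 \<Longrightarrow> eps r = eps_explicit r"
  unfolding eps_def eps_axioms_def[symmetric]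
  using eps_axioms_unique eps_axioms_eps_explicit by (intro the_equality) blast+

section \<open>Dual functionals\<close>

context vector_space
begin

lemma functional_sum:
  assumes add: "\<And>x y. L (x + y) = L x + L y" and scale: "\<And>c x. L (c *s x) = c * L x"
  shows "L (\<Sum>v\<in>T. u v *s v) = (\<Sum>v\<in>T. u v * L v)"
proof -
  have "L 0 = 0"
    using scale[of 0 0] by simp
  then show ?thesis
    by (induction T rule: infinite_finite_induct) (simp_all add: add scale)
qed

lemma functional_vanishes_on_span:
  assumes add: "\<And>x y. L (x + y) = L x + L y" and scale: "\<And>c x. L (c *s x) = c * L x"
    and vanish: "\<And>w. w \<in> W \<Longrightarrow> L w = 0" and x: "x \<in> span W"
  shows "L x = 0"
  using x
proof (induction rule: span_induct_alt)
  case base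
  show ?case
    using scale[of 0 0] by simp
next
  case (step c w y)
  then show ?case
    by (simp add: add scale vanish)
qed

lemma dim_Un_biorthogonal:
  fixes b :: "'i \<Rightarrow> 'b" and L :: "'i \<Rightarrow> 'b \<Rightarrow> 'a"
  assumes I: "finite I" and B: "finite B" "W \<subseteq> span B"
    and add: "\<And>i x y. i \<in> I \<Longrightarrow> L i (x + y) = L i x + L i y"
    and scale: "\<And>i c x. i \<in> I \<Longrightarrow> L i (c *s x) = c * L i x"
    and vanish: "\<And>i w. i \<in> I \<Longrightarrow> w \<in> W \<Longrightarrow> L i w = 0"
    and dual: "\<And>i j. i \<in> I \<Longrightarrow> j \<in> I \<Longrightarrow> L i (b j) = (if i = j then 1 else 0)"
  shows "dim (b ` I \<union> W) = card I + dim W"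
proof -
  obtain C where C: "C \<subseteq> W" "independent C" "W \<subseteq> span C" "card C = dim W"
    using basis_exists by blast
  have C_fin: "finite C"
    using independent_span_bound[OF B(1) C(2)] C(1) B(2) by blast
  have inj: "inj_on b I"
    by (rule inj_onI) (metis dual zero_neq_one)
  have disj: "b ` I \<inter> C = {}"
    using C(1) vanish dual by fastforce
  have L_on: "L i v = (if v = b i then 1 else 0)" if "i \<in> I" "v \<in> b ` I \<union> C" for i v
    using that C(1) vanish dual disj inj by (auto dest: inj_onD)
  have indep: "independent (b ` I \<union> C)"
  proof (rule independent_if_scalars_zero)
    show "finite (b ` I \<union> C)"
      using I C_fin by simp
  next
    fix f v assume sum0: "(\<Sum>x\<in>b ` I \<union> C. f x *s x) = 0" and v: "v \<in> b ` I \<union> C"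
    have f_b: "f (b i) = 0" if i: "i \<in> I" for i
    proof -
      have "L i (\<Sum>x\<in>b ` I \<union> C. f x *s x) = (\<Sum>x\<in>b ` I \<union> C. f x * L i x)"
        using functional_sum add[OF i] scale[OF i] by blast
      also have "\<dots> = (\<Sum>x\<in>b ` I \<union> C. if x = b i then f x else 0)"
        using L_on[OF i] by (intro sum.cong) auto
      also have "\<dots> = f (b i)"
        using I C_fin i by (simp add: sum.delta')
      finally show ?thesis
        using sum0 scale[OF i, of 0 0] by simp
    qed
    then have "(\<Sum>x\<in>C. f x *s x) = 0"
      using sum0 I C_fin by (subst (asm) sum.mono_neutral_right[of "b ` I \<union> C" C]) auto
    then show "f v = 0"
      using v f_b independentD[OF C(2) C_fin subset_refl] by blast
  qed
  have "span (b ` I \<union> W) = span (b ` I \<union> C)"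
    unfolding span_eq using C(1,3) span_superset span_mono
    by (meson Un_mono Un_subset_iff order_trans subset_refl)
  then have "dim (b ` I \<union> W) = card (b ` I \<union> C)"
    using dim_eq_card indep by blast
  also have "\<dots> = card I + dim W"
    using I C_fin disj C(4) by (simp add: card_Un_disjoint card_image[OF inj])
  finally show ?thesis .
qed

end

interpretation cs: vector_space "cscale :: complex \<Rightarrow> ('a \<Rightarrow> complex) \<Rightarrow> 'a \<Rightarrow> complex"
  by unfold_locales (auto simp: cscale_def fun_eq_iff algebra_simps)

section \<open>The code \<open>C\<^sub>G\<close> and the groups \<open>\<Delta>\<^sup>d\<close>\<close>

lemma CG_subset_Pow: "CG r G \<subseteq> Pow {..<2*r}"
  by (auto simp: CG_def perp_def Z2_def)

lemma finite_CG: "finite (CG r G)"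
  using CG_subset_Pow finite_subset by (metis finite_Pow_iff finite_lessThan)

lemma CG_vadd:
  assumes "b \<in> CG r G" "b' \<in> CG r G"
  shows "vadd b b' \<in> CG r G"
proof -
  have sub: "b \<subseteq> {..<2*r}" "b' \<subseteq> {..<2*r}"
    using assms CG_subset_Pow by auto
  have "even (wt r (vmul (vadd b b') a))" if "a \<in> DG r G" for a
  proof -
    have "vmul b a \<subseteq> {..<2*r}" "vmul b' a \<subseteq> {..<2*r}"
      using sub by (auto simp: vmul_def)
    moreover have "even (wt r (vmul b a))" "even (wt r (vmul b' a))"
      using assms that by (auto simp: CG_def perp_def)
    ultimately have "even (card (vmul b a))" "even (card (vmul b' a))"
      using even_wt_iff by blast+
    moreover have "vmul (vadd b b') a = sym_diff (vmul b a) (vmul b' a)"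
      by (auto simp: vmul_def vadd_def)
    moreover have "finite (vmul b a)" "finite (vmul b' a)" "vmul (vadd b b') a \<subseteq> {..<2*r}"
      using sub by (auto simp: vmul_def vadd_def intro: finite_subset[of _ "{..<2*r}"])
    ultimately show ?thesis
      using even_card_sym_diff_iff even_wt_iff by metis
  qed
  moreover have "vadd b b' \<subseteq> {..<2*r}"
    using sub by (auto simp: vadd_def)
  ultimately show ?thesis
    by (simp add: CG_def perp_def Z2_def)
qed

lemma Delta_Int_lessThan: "g \<subseteq> {..<r} \<Longrightarrow> Delta r g \<inter> {..<r} = g"
  by (auto simp: Delta_def)

lemma Delta_subset: "g \<subseteq> {..<r} \<Longrightarrow> Delta r g \<subseteq> {..<2*r}"
  by (auto simp: Delta_def)

lemma wl_Delta: "g \<subseteq> {..<r} \<Longrightarrow> wl r (Delta r g) = card g"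
  by (simp add: wl_def Delta_Int_lessThan)

lemma wt_Delta: "g \<subseteq> {..<r} \<Longrightarrow> wt r (Delta r g) = 0"
proof -
  assume g: "g \<subseteq> {..<r}"
  have "Delta r g \<inter> {r..<2*r} = (\<lambda>i. i + r) ` g"
    using g by (auto simp: Delta_def)
  then have "wr r (Delta r g) = card g"
    by (simp add: wr_def card_image)
  then show ?thesis
    using g by (simp add: wt_def wl_Delta)
qed

lemma vmul_Delta:
  "g \<subseteq> {..<r} \<Longrightarrow> h \<subseteq> {..<r} \<Longrightarrow> vmul (Delta r g) (Delta r h) = Delta r (g \<inter> h)"
  by (auto simp: vmul_def Delta_def)

lemma vadd_Delta:
  "g \<subseteq> {..<r} \<Longrightarrow> h \<subseteq> {..<r} \<Longrightarrow> vadd (Delta r g) (Delta r h) = Delta r (vadd g h)"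
  by (auto simp: vadd_def Delta_def)

lemma Delta_subset_Delta_iff:
  "g \<subseteq> {..<r} \<Longrightarrow> h \<subseteq> {..<r} \<Longrightarrow> Delta r g \<subseteq> Delta r h \<longleftrightarrow> g \<subseteq> h"
  by (metis Delta_Int_lessThan Int_mono order_refl Delta_def Un_mono image_mono)

lemma inj_on_Delta: "inj_on (Delta r) (Pow {..<r})"
  by (metis Delta_Int_lessThan PowD inj_onI)

lemma Delta_ones: "Delta r (ones r) = {..<2*r}"
proof -
  have "x \<in> Delta r {..<r}" if "x < 2*r" for x
    using that by (cases "x < r") (auto simp: Delta_def image_iff intro!: bexI[of _ "x - r"])
  then show ?thesis
    by (auto simp: Delta_def ones_def)
qed

lemma Delta_in_CG:
  assumes "G \<subseteq> Z2 r" "g \<subseteq> {..<r}"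
  shows "Delta r g \<in> CG r G"
proof -
  have "wt r (vmul (Delta r g) (Delta r h)) = 0" if "h \<in> G" for h
  proof -
    have "h \<subseteq> {..<r}"
      using assms(1) that by (auto simp: Z2_def)
    then show ?thesis
      using assms(2) by (simp add: vmul_Delta wt_Delta le_infI1)
  qed
  then show ?thesis
    using Delta_subset[OF assms(2)] by (auto simp: CG_def perp_def Z2_def DG_def)
qed

lemma Deltad_Delta:
  assumes h: "h \<subseteq> {..<r}"
  shows "Deltad r (Delta r h) = Delta r ` Pow h"
proof
  show "Deltad r (Delta r h) \<subseteq> Delta r ` Pow h"
  proof
    fix x assume "x \<in> Deltad r (Delta r h)"
    then obtain g where g: "g \<subseteq> {..<r}" "x = Delta r g" "Delta r g \<subseteq> Delta r h"
      by (auto simp: Deltad_def Z2sub_def Z2_def vmul_def)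
    then show "x \<in> Delta r ` Pow h"
      using Delta_subset_Delta_iff[OF g(1) h] by auto
  qed
  show "Delta r ` Pow h \<subseteq> Deltad r (Delta r h)"
  proof
    fix x assume "x \<in> Delta r ` Pow h"
    then obtain g where g: "g \<subseteq> h" "x = Delta r g"
      by auto
    then have "g \<subseteq> {..<r}" "Delta r g \<subseteq> Delta r h"
      using h Delta_subset_Delta_iff[of g r h] by auto
    then show "x \<in> Deltad r (Delta r h)"
      using g Delta_subset by (auto simp: Deltad_def Z2sub_def Z2_def vmul_def)
  qed
qed

lemma card_Deltad_Delta:
  assumes h: "h \<subseteq> {..<r}"
  shows "card (Deltad r (Delta r h)) = 2 ^ card h"
proof -
  have "inj_on (Delta r) (Pow h)"
    using inj_on_Delta h by (meson Pow_mono inj_on_subset)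
  moreover have "finite h"
    using h finite_subset by blast
  ultimately show ?thesis
    unfolding Deltad_Delta[OF h] by (simp add: card_image card_Pow)
qed

lemma Deltad_subset: "h \<in> Deltad r d \<Longrightarrow> h \<subseteq> d"
  by (auto simp: Deltad_def Z2sub_def vmul_def)

lemma Z2sub_vadd: "a \<in> Z2sub r d \<Longrightarrow> b \<in> Z2sub r d \<Longrightarrow> vadd a b \<in> Z2sub r d"
  by (auto simp: Z2sub_def Z2_def vmul_def vadd_def)

lemma is_subgroup_Deltad: "is_subgroup_Z2 (2*r) (Deltad r d)"
  unfolding is_subgroup_Z2_def
proof (intro conjI ballI)
  show "Deltad r d \<subseteq> Z2 (2*r)"
    by (auto simp: Deltad_def Z2sub_def)
  have "Delta r {} = {}" "{} \<in> Z2 r" "{} \<in> Z2sub r d"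
    by (simp_all add: Delta_def Z2_def Z2sub_def vmul_def)
  then show "{} \<in> Deltad r d"
    unfolding Deltad_def by (metis IntI image_eqI)
  fix a b assume a: "a \<in> Deltad r d" and b: "b \<in> Deltad r d"
  then obtain g h where gh: "a = Delta r g" "b = Delta r h" "g \<in> Z2 r" "h \<in> Z2 r"
    by (auto simp: Deltad_def)
  then have "vadd a b = Delta r (vadd g h)" "vadd g h \<in> Z2 r"
    by (auto simp: Z2_def vadd_Delta) (auto simp: vadd_def)
  moreover have "vadd a b \<in> Z2sub r d"
    using a b Z2sub_vadd by (auto simp: Deltad_def)
  ultimately show "vadd a b \<in> Deltad r d"
    by (auto simp: Deltad_def)
qed

lemma Deltad_subset_CG: "G \<subseteq> Z2 r \<Longrightarrow> Deltad r d \<subseteq> CG r G"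
  using Delta_in_CG by (auto simp: Deltad_def Z2_def)

lemma eps_explicit_Deltad: "h \<in> Deltad r d \<Longrightarrow> eps_explicit r h b = 1"
  by (auto simp: Deltad_def Z2_def eps_explicit_Delta_left)

section \<open>Cosets\<close>

definition cosets :: "nat set set \<Rightarrow> nat set set \<Rightarrow> nat set set set" where
  "cosets H X = (\<lambda>\<beta>. vadd \<beta> ` H) ` X"

definition coset_rep :: "nat set set \<Rightarrow> nat set" where
  "coset_rep K = (SOME \<alpha>. \<alpha> \<in> K)"

lemma vadd_image_subgroup:
  assumes "is_subgroup_Z2 n H" "h \<in> H"
  shows "vadd h ` H = H"
proof
  show "vadd h ` H \<subseteq> H"
    using assms by (auto simp: is_subgroup_Z2_def)
  show "H \<subseteq> vadd h ` H"
  proof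
    fix x assume "x \<in> H"
    then have "vadd h x \<in> H"
      using assms by (simp add: is_subgroup_Z2_def)
    then show "x \<in> vadd h ` H"
      by (metis image_eqI vadd_vadd_cancel)
  qed
qed

lemma vadd_coset_eq:
  assumes "is_subgroup_Z2 n H" "y \<in> vadd \<beta> ` H"
  shows "vadd y ` H = vadd \<beta> ` H"
proof -
  obtain h where h: "h \<in> H" "y = vadd \<beta> h"
    using assms(2) by blast
  have "vadd y ` H = vadd \<beta> ` vadd h ` H"
    by (auto simp: h(2) vadd_assoc image_image)
  then show ?thesis
    using vadd_image_subgroup[OF assms(1) h(1)] by simp
qed

lemma coset_rep_in:
  assumes "is_subgroup_Z2 n H" "K \<in> cosets H X"
  shows "coset_rep K \<in> K"
proof -
  obtain \<beta> where "K = vadd \<beta> ` H"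
    using assms(2) by (auto simp: cosets_def)
  moreover have "\<beta> = vadd \<beta> {}" "{} \<in> H"
    using assms(1) by (simp_all add: is_subgroup_Z2_def)
  ultimately have "\<beta> \<in> K"
    by blast
  then show ?thesis
    unfolding coset_rep_def by (rule someI)
qed

lemma coset_rep_coset:
  assumes "is_subgroup_Z2 n H" "K \<in> cosets H X"
  shows "vadd (coset_rep K) ` H = K"
proof -
  obtain \<beta> where "K = vadd \<beta> ` H"
    using assms(2) by (auto simp: cosets_def)
  then show ?thesis
    using coset_rep_in[OF assms] vadd_coset_eq[OF assms(1)] by simp
qed

lemma vadd_coset_rep_in:
  assumes "is_subgroup_Z2 n H" "K \<in> cosets H X" "\<beta> \<in> K"
  shows "vadd \<beta> (coset_rep K) \<in> H"
proof -
  obtain h where "h \<in> H" "\<beta> = vadd (coset_rep K) h"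
    using assms coset_rep_coset by blast
  then show ?thesis
    by (metis vadd_comm vadd_vadd_cancel)
qed

lemma coset_vadd_closed:
  assumes "is_subgroup_Z2 n H" "K \<in> cosets H X" "\<beta> \<in> K" "h \<in> H"
  shows "vadd \<beta> h \<in> K"
proof -
  have "K = vadd (coset_rep K) ` H"
    using coset_rep_coset[OF assms(1,2)] by simp
  then have "vadd \<beta> ` H = K"
    using vadd_coset_eq[OF assms(1), of \<beta> "coset_rep K"] assms(3) by simp
  then show ?thesis
    using assms(4) by blast
qed

lemma coset_eq_if_rep_in:
  assumes "is_subgroup_Z2 n H" "K \<in> cosets H X" "K' \<in> cosets H X" "coset_rep K' \<in> K"
  shows "K = K'"
proof -
  have "K = vadd (coset_rep K) ` H" "K' = vadd (coset_rep K') ` H"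
    using coset_rep_coset[OF assms(1)] assms(2,3) by simp_all
  then show ?thesis
    using vadd_coset_eq[OF assms(1), of "coset_rep K'" "coset_rep K"] assms(4) by simp
qed

lemma coset_subset:
  assumes "\<forall>x\<in>X. \<forall>h\<in>H. vadd x h \<in> X" "K \<in> cosets H X"
  shows "K \<subseteq> X"
  using assms by (auto simp: cosets_def)

lemma card_eq_card_cosets:
  assumes H: "is_subgroup_Z2 n H" and X: "finite X" "\<forall>x\<in>X. \<forall>h\<in>H. vadd x h \<in> X"
  shows "card X = card H * card (cosets H X)"
proof -
  have "\<Union> (cosets H X) = X"
  proof
    show "\<Union> (cosets H X) \<subseteq> X"
      using X(2) by (auto simp: cosets_def)
    show "X \<subseteq> \<Union> (cosets H X)"
    proof
      fix x assume "x \<in> X"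
      moreover have "x \<in> vadd x ` H"
        using H by (metis image_eqI is_subgroup_Z2_def vadd_empty(1))
      ultimately show "x \<in> \<Union> (cosets H X)"
        by (auto simp: cosets_def)
    qed
  qed
  moreover have "card H * card (cosets H X) = card (\<Union> (cosets H X))"
  proof (rule card_partition)
    show "finite (cosets H X)" "finite (\<Union> (cosets H X))"
      using X(1) calculation by (simp_all add: cosets_def)
    show "card K = card H" if "K \<in> cosets H X" for K
      using that inj_on_vadd by (auto simp: cosets_def card_image)
    show "K \<inter> K' = {}" if K: "K \<in> cosets H X" and K': "K' \<in> cosets H X" and "K \<noteq> K'" for K K'
    proof (rule ccontr)
      assume "K \<inter> K' \<noteq> {}"
      then obtain y where "y \<in> K" "y \<in> K'"
        by blast
      obtain a b where "K = vadd a ` H" "K' = vadd b ` H"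
        using K K' by (auto simp: cosets_def)
      then have "vadd y ` H = K" "vadd y ` H = K'"
        using \<open>y \<in> K\<close> \<open>y \<in> K'\<close> vadd_coset_eq[OF H] by blast+
      then show False
        using \<open>K \<noteq> K'\<close> by simp
    qed
  qed
  ultimately show ?thesis
    by simp
qed

lemma sum_vadd_coset:
  assumes "is_subgroup_Z2 n H" "K \<in> cosets H X" "\<gamma> \<in> H"
  shows "(\<Sum>\<beta>\<in>K. g (vadd \<beta> \<gamma>)) = (\<Sum>\<beta>\<in>K. g \<beta>)"
  by (rule sum.reindex_bij_witness[of K "\<lambda>\<beta>. vadd \<beta> \<gamma>" "\<lambda>\<beta>. vadd \<beta> \<gamma>"])
     (use coset_vadd_closed[OF assms(1,2) _ assms(3)] in \<open>auto simp: vadd_assoc\<close>)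

section \<open>The graded pieces of \<open>S\<^sub>G\<close>\<close>

lemma sum_apply: "(\<Sum>a\<in>A. f a) x = (\<Sum>a\<in>A. f a x)"
  by (induction A rule: infinite_finite_induct) auto

definition unit_vec :: "'a \<Rightarrow> 'a \<Rightarrow> complex" where
  "unit_vec p = (\<lambda>q. if q = p then 1 else 0)"

lemma in_span_unit_vec:
  assumes P: "finite P" and f: "\<And>p. f p \<noteq> 0 \<Longrightarrow> p \<in> P"
  shows "f \<in> cs.span (unit_vec ` P)"
proof -
  have "f = (\<Sum>p\<in>P. cscale (f p) (unit_vec p))"
  proof
    fix q
    have "(\<Sum>p\<in>P. cscale (f p) (unit_vec p)) q = (\<Sum>p\<in>P. if p = q then f q else 0)"
      unfolding sum_apply by (rule sum.cong) (auto simp: cscale_def unit_vec_def)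
    also have "\<dots> = f q"
      using P f by (cases "q \<in> P") auto
    finally show "f q = (\<Sum>p\<in>P. cscale (f p) (unit_vec p)) q"
      by simp
  qed
  also have "\<dots> \<in> cs.span (unit_vec ` P)"
    by (intro cs.span_sum cs.span_scale cs.span_base) auto
  finally show ?thesis .
qed

definition relation_vec :: "nat \<Rightarrow> nat set set \<Rightarrow> nat set \<Rightarrow> (nat set \<Rightarrow> complex) \<Rightarrow> nat set
    \<Rightarrow> nat set \<times> nat set \<Rightarrow> complex" where
  "relation_vec r G d x \<gamma> = (\<lambda>(d', \<beta>). if d' = d then twmul r G x (ebas \<gamma>) \<beta> - x \<beta> else 0)"

lemma Srelgen_eq:
  "Srelgen r G = {relation_vec r G d x \<gamma> | d x \<gamma>. d \<in> DG r G \<and> suppIn x (CG r G) \<and> \<gamma> \<in> Deltad r d}"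
  by (simp add: Srelgen_def relation_vec_def)

lemma twmul_ebas:
  assumes "\<gamma> \<in> CG r G"
  shows "twmul r G x (ebas \<gamma>) \<beta>
    = (if vadd \<beta> \<gamma> \<in> CG r G then eps r (vadd \<beta> \<gamma>) \<gamma> * x (vadd \<beta> \<gamma>) else 0)"
proof -
  have "(\<Sum>\<alpha>'\<in>CG r G. if vadd \<alpha> \<alpha>' = \<beta> then eps r \<alpha> \<alpha>' * x \<alpha> * ebas \<gamma> \<alpha>' else 0)
      = (if \<alpha> = vadd \<beta> \<gamma> then eps r \<alpha> \<gamma> * x \<alpha> else 0)" for \<alpha>
  proof -
    have "(\<Sum>\<alpha>'\<in>CG r G. if vadd \<alpha> \<alpha>' = \<beta> then eps r \<alpha> \<alpha>' * x \<alpha> * ebas \<gamma> \<alpha>' else 0)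
        = (\<Sum>\<alpha>'\<in>CG r G. if \<alpha>' = \<gamma> then (if vadd \<alpha> \<gamma> = \<beta> then eps r \<alpha> \<gamma> * x \<alpha> else 0) else 0)"
      by (rule sum.cong) (auto simp: ebas_def)
    then show ?thesis
      using assms finite_CG by (simp add: vadd_eq_iff)
  qed
  then have "twmul r G x (ebas \<gamma>) \<beta> = (\<Sum>\<alpha>\<in>CG r G. if \<alpha> = vadd \<beta> \<gamma> then eps r \<alpha> \<gamma> * x \<alpha> else 0)"
    unfolding twmul_def by simp
  also have "\<dots> = (if vadd \<beta> \<gamma> \<in> CG r G then eps r (vadd \<beta> \<gamma>) \<gamma> * x (vadd \<beta> \<gamma>) else 0)"
    using finite_CG by (simp add: sum.delta')
  finally show ?thesis .
qed

text \<open>For \<open>h \<in> \<Delta>\<^sup>d\<close> one has \<open>e\<^bsub>a+h\<^esub> t\<^sub>d = \<epsilon>(a,h) e\<^sub>a t\<^sub>d\<close> in \<open>S\<^sub>G\<close>, since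
  \<open>e\<^sub>a e\<^sub>h = \<epsilon>(a,h) e\<^bsub>a+h\<^esub>\<close> and \<open>\<epsilon>(a,h)\<^sup>2 = 1\<close>; the functional reads off the coefficient of
  \<open>e\<^sub>a t\<^sub>d\<close>, \<open>a\<close> the representative of the coset \<open>K\<close>.\<close>
definition coset_coeff ::
    "nat \<Rightarrow> nat set \<Rightarrow> nat set set \<Rightarrow> (nat set \<times> nat set \<Rightarrow> complex) \<Rightarrow> complex" where
  "coset_coeff r d K f = (\<Sum>\<beta>\<in>K. eps_explicit r (coset_rep K) (vadd \<beta> (coset_rep K)) * f (d, \<beta>))"

lemma coset_coeff_add: "coset_coeff r d K (f + g) = coset_coeff r d K f + coset_coeff r d K g"
  by (simp add: coset_coeff_def distrib_left sum.distrib)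

lemma coset_coeff_cscale: "coset_coeff r d K (cscale c f) = c * coset_coeff r d K f"
  by (simp add: coset_coeff_def cscale_def sum_distrib_left mult.left_commute)

definition degree_support :: "nat \<Rightarrow> nat set set \<Rightarrow> nat set \<times> nat set \<Rightarrow> nat set set" where
  "degree_support r G \<mu> = {\<alpha> \<in> CG r G. fst \<mu> \<in> DG r G \<and> (fst \<mu>, vmul (dperp r (fst \<mu>)) \<alpha>) = \<mu>}"

lemma Shom_eq_span: "Shom r G \<mu> = cs.span ((\<lambda>\<alpha>. unit_vec (fst \<mu>, \<alpha>)) ` degree_support r G \<mu>)"
proof -
  have "{(\<lambda>p. if p = (d, \<alpha>) then 1 else 0) | d \<alpha>.
      d \<in> DG r G \<and> \<alpha> \<in> CG r G \<and> (d, vmul (dperp r d) \<alpha>) = \<mu>}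
    = (\<lambda>\<alpha>. unit_vec (fst \<mu>, \<alpha>)) ` degree_support r G \<mu>"
    by (auto simp: unit_vec_def degree_support_def)
  then show ?thesis
    by (simp add: Shom_def)
qed

locale subgroup_with_ones =
  fixes r :: nat and G :: "nat set set"
  assumes r_pos: "r \<ge> 1" and subgroup: "is_subgroup_Z2 r G" and ones_in: "ones r \<in> G"
begin

lemma G_subset: "G \<subseteq> Z2 r"
  using subgroup by (simp add: is_subgroup_Z2_def)

lemma finite_DG: "finite (DG r G)"
  using G_subset finite_subset unfolding DG_def Z2_def by (metis finite_Pow_iff finite_imageI finite_lessThan)

lemma DG_cases:
  assumes "d \<in> DG r G"
  obtains h where "h \<in> G" "h \<subseteq> {..<r}" "d = Delta r h"
  using assms G_subset by (auto simp: DG_def Z2_def)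

lemma CG_subset_Ceven: "CG r G \<subseteq> Ceven r"
proof
  fix b assume b: "b \<in> CG r G"
  then have b_sub: "b \<subseteq> {..<2*r}"
    using CG_subset_Pow by blast
  have "{..<2*r} \<in> DG r G"
    using ones_in Delta_ones by (metis DG_def image_eqI)
  then have "even (wt r (vmul b {..<2*r}))"
    using b by (auto simp: CG_def perp_def)
  moreover have "vmul b {..<2*r} = b"
    using b_sub by (auto simp: vmul_def)
  ultimately show "b \<in> Ceven r"
    using b_sub by (simp add: Ceven_def Z2_def)
qed

lemma eps_eq: "eps r = eps_explicit r"
  using eps_eq_eps_explicit r_pos by simp

lemma card_Deltad: "d \<in> DG r G \<Longrightarrow> card (Deltad r d) = 2 ^ wl r d"
  by (elim DG_cases) (simp add: card_Deltad_Delta wl_Delta)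

lemma vmul_dperp: "a \<subseteq> {..<2*r} \<Longrightarrow> vmul (dperp r d) a = a - d"
  by (auto simp: dperp_def vmul_def vadd_def ones_def)

lemma CG_vadd_Deltad: "\<alpha> \<in> CG r G \<Longrightarrow> h \<in> Deltad r d \<Longrightarrow> vadd \<alpha> h \<in> CG r G"
  using CG_vadd Deltad_subset_CG[OF G_subset] by blast

lemma coset_subset_CG: "K \<in> cosets (Deltad r d) (CG r G) \<Longrightarrow> K \<subseteq> CG r G"
  using coset_subset CG_vadd_Deltad by blast

lemma Srel_subset_span_unit_vec: "Srel r G \<subseteq> cs.span (unit_vec ` (DG r G \<times> CG r G))"
  unfolding Srel_def
proof (rule cs.span_minimal[OF _ cs.subspace_span], rule subsetI)
  fix g assume "g \<in> Srelgen r G"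
  then obtain d x \<gamma> where g: "g = relation_vec r G d x \<gamma>"
    and d: "d \<in> DG r G" and x: "suppIn x (CG r G)" and \<gamma>: "\<gamma> \<in> Deltad r d"
    by (auto simp: Srelgen_eq)
  have \<gamma>_CG: "\<gamma> \<in> CG r G"
    using \<gamma> Deltad_subset_CG[OF G_subset] by blast
  have "p \<in> DG r G \<times> CG r G" if "g p \<noteq> 0" for p
  proof -
    obtain d' \<beta> where p: "p = (d', \<beta>)"
      by (cases p)
    have "d' = d" and "twmul r G x (ebas \<gamma>) \<beta> \<noteq> 0 \<or> x \<beta> \<noteq> 0"
      using that by (auto simp: g p relation_vec_def split: if_splits)
    moreover have "\<beta> \<in> CG r G" if "twmul r G x (ebas \<gamma>) \<beta> \<noteq> 0"
      using that CG_vadd[OF _ \<gamma>_CG] by (fastforce simp: twmul_ebas[OF \<gamma>_CG] vadd_assoc split: if_splits)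
    ultimately show ?thesis
      using x d p by (auto simp: suppIn_def)
  qed
  then show "g \<in> cs.span (unit_vec ` (DG r G \<times> CG r G))"
    using finite_DG finite_CG by (intro in_span_unit_vec) auto
qed

lemma eps_explicit_coset_shift:
  assumes K: "K \<in> cosets (Deltad r d) (CG r G)" and \<beta>: "\<beta> \<in> K" and \<gamma>: "\<gamma> \<in> Deltad r d"
  shows "eps_explicit r (coset_rep K) (vadd (vadd \<beta> \<gamma>) (coset_rep K)) * eps_explicit r \<beta> \<gamma>
    = eps_explicit r (coset_rep K) (vadd \<beta> (coset_rep K))"
proof -
  let ?a = "coset_rep K"
  have a_K: "?a \<in> K" and h: "vadd \<beta> ?a \<in> Deltad r d"
    using coset_rep_in[OF is_subgroup_Deltad K] vadd_coset_rep_in[OF is_subgroup_Deltad K \<beta>] .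
  have Ceven: "?a \<in> Ceven r" "\<beta> \<in> Ceven r" "\<gamma> \<in> Ceven r" "vadd \<beta> ?a \<in> Ceven r"
    using a_K \<beta> \<gamma> h coset_subset_CG[OF K] Deltad_subset_CG[OF G_subset] CG_subset_Ceven by blast+
  have "vadd (vadd \<beta> \<gamma>) ?a = vadd (vadd \<beta> ?a) \<gamma>"
    by (auto simp: vadd_def)
  then have "eps_explicit r ?a (vadd (vadd \<beta> \<gamma>) ?a) * eps_explicit r \<beta> \<gamma>
      = eps_explicit r ?a (vadd \<beta> ?a) * (eps_explicit r ?a \<gamma> * eps_explicit r \<beta> \<gamma>)"
    using eps_explicit_vadd_right[OF Ceven(4,3,1)] by simp
  also have "eps_explicit r ?a \<gamma> * eps_explicit r \<beta> \<gamma> = eps_explicit r (vadd \<beta> ?a) \<gamma>"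
    using eps_explicit_vadd_left[OF Ceven(2,1,3)] by simp
  also have "\<dots> = 1"
    using h by (rule eps_explicit_Deltad)
  finally show ?thesis
    by simp
qed

lemma coset_coeff_relation_vec:
  assumes K: "K \<in> cosets (Deltad r d) (CG r G)" and \<gamma>: "\<gamma> \<in> Deltad r d'"
  shows "coset_coeff r d K (relation_vec r G d' x \<gamma>) = 0"
proof (cases "d' = d")
  case True
  let ?\<phi> = "\<lambda>\<beta>. eps_explicit r (coset_rep K) (vadd \<beta> (coset_rep K))"
  have \<gamma>_CG: "\<gamma> \<in> CG r G"
    using \<gamma> Deltad_subset_CG[OF G_subset] by blast
  have "relation_vec r G d' x \<gamma> (d, \<beta>) = eps_explicit r (vadd \<beta> \<gamma>) \<gamma> * x (vadd \<beta> \<gamma>) - x \<beta>"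
    if "\<beta> \<in> K" for \<beta>
    using that True \<gamma> coset_subset_CG[OF K] CG_vadd_Deltad
    by (auto simp: relation_vec_def twmul_ebas[OF \<gamma>_CG] eps_eq)
  then have "coset_coeff r d K (relation_vec r G d' x \<gamma>)
      = (\<Sum>\<beta>\<in>K. ?\<phi> \<beta> * (eps_explicit r (vadd \<beta> \<gamma>) \<gamma> * x (vadd \<beta> \<gamma>))) - (\<Sum>\<beta>\<in>K. ?\<phi> \<beta> * x \<beta>)"
    unfolding coset_coeff_def by (simp add: right_diff_distrib sum_subtractf)
  also have "(\<Sum>\<beta>\<in>K. ?\<phi> \<beta> * (eps_explicit r (vadd \<beta> \<gamma>) \<gamma> * x (vadd \<beta> \<gamma>)))
      = (\<Sum>\<beta>\<in>K. ?\<phi> (vadd \<beta> \<gamma>) * (eps_explicit r \<beta> \<gamma> * x \<beta>))"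
    using sum_vadd_coset[OF is_subgroup_Deltad K, of \<gamma> "\<lambda>\<beta>. ?\<phi> (vadd \<beta> \<gamma>) * (eps_explicit r \<beta> \<gamma> * x \<beta>)"]
      \<gamma> True by (simp add: vadd_assoc)
  also have "\<dots> = (\<Sum>\<beta>\<in>K. ?\<phi> \<beta> * x \<beta>)"
    using eps_explicit_coset_shift[OF K _ \<gamma>[unfolded True]] by (intro sum.cong) (simp_all add: mult.assoc[symmetric])
  finally show ?thesis
    by simp
qed (simp add: coset_coeff_def relation_vec_def)

lemma coset_coeff_Srel:
  assumes "K \<in> cosets (Deltad r d) (CG r G)" "f \<in> Srel r G"
  shows "coset_coeff r d K f = 0"
proof -
  have "coset_coeff r d K w = 0" if "w \<in> Srelgen r G" for w
    using that coset_coeff_relation_vec[OF assms(1)] by (auto simp: Srelgen_eq)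
  then show ?thesis
    using cs.functional_vanishes_on_span[of "coset_coeff r d K" "Srelgen r G" f]
      coset_coeff_add coset_coeff_cscale assms(2) unfolding Srel_def by blast
qed

lemma coset_coeff_unit_vec:
  assumes K: "K \<in> cosets (Deltad r d) (CG r G)" and K': "K' \<in> cosets (Deltad r d) (CG r G)"
  shows "coset_coeff r d K (unit_vec (d, coset_rep K')) = (if K = K' then 1 else 0)"
proof -
  have "finite K"
    using coset_subset_CG[OF K] finite_CG finite_subset by blast
  then have "coset_coeff r d K (unit_vec (d, coset_rep K'))
      = (if coset_rep K' \<in> K then eps_explicit r (coset_rep K) (vadd (coset_rep K') (coset_rep K)) else 0)"
    by (simp add: coset_coeff_def unit_vec_def if_distrib[of "\<lambda>y. _ * y"] sum.delta' cong: if_cong)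
  also have "\<dots> = (if K = K' then 1 else 0)"
    using coset_rep_in[OF is_subgroup_Deltad K] coset_eq_if_rep_in[OF is_subgroup_Deltad K K'] by auto
  finally show ?thesis .
qed

lemma unit_vec_in_span_coset_rep:
  assumes d: "d \<in> DG r G" and \<alpha>: "\<alpha> \<in> CG r G"
  defines "a \<equiv> coset_rep (vadd \<alpha> ` Deltad r d)"
  shows "unit_vec (d, \<alpha>) \<in> cs.span (insert (unit_vec (d, a)) (Srel r G))"
proof -
  let ?K = "vadd \<alpha> ` Deltad r d"
  have K: "?K \<in> cosets (Deltad r d) (CG r G)"
    using \<alpha> by (simp add: cosets_def)
  have "\<alpha> \<in> ?K"
    using is_subgroup_Deltad by (force simp: is_subgroup_Z2_def)
  define h where "h = vadd \<alpha> a"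
  have h: "h \<in> Deltad r d"
    using vadd_coset_rep_in[OF is_subgroup_Deltad K \<open>\<alpha> \<in> ?K\<close>] by (simp add: h_def a_def)
  have a_CG: "a \<in> CG r G" and h_CG: "h \<in> CG r G"
    using coset_rep_in[OF is_subgroup_Deltad K] coset_subset_CG[OF K] h Deltad_subset_CG[OF G_subset]
    by (auto simp: a_def)
  define g where "g = relation_vec r G d (ebas a) h"
  have "suppIn (ebas a) (CG r G)"
    using a_CG by (simp add: suppIn_def ebas_def)
  then have "g \<in> Srelgen r G"
    unfolding Srelgen_eq g_def using d h by blast
  then have "g \<in> Srel r G"
    unfolding Srel_def by (rule cs.span_base)
  moreover have "g = cscale (eps_explicit r a h) (unit_vec (d, \<alpha>)) - unit_vec (d, a)"
  proof
    fix q :: "nat set \<times> nat set"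
    obtain d' \<beta> where q: "q = (d', \<beta>)"
      by (cases q)
    have "vadd \<beta> h = a \<longleftrightarrow> \<beta> = \<alpha>"
      unfolding h_def vadd_def by blast
    moreover have "twmul r G (ebas a) (ebas h) \<beta>
        = (if vadd \<beta> h \<in> CG r G then eps_explicit r (vadd \<beta> h) h * ebas a (vadd \<beta> h) else 0)"
      using twmul_ebas[OF h_CG] eps_eq by simp
    ultimately have "twmul r G (ebas a) (ebas h) \<beta> = (if \<beta> = \<alpha> then eps_explicit r a h else 0)"
      using a_CG by (auto simp: ebas_def)
    then show "g q = (cscale (eps_explicit r a h) (unit_vec (d, \<alpha>)) - unit_vec (d, a)) q"
      by (auto simp: g_def q relation_vec_def cscale_def unit_vec_def ebas_def)
  qed
  ultimately have "unit_vec (d, \<alpha>) = cscale (eps_explicit r a h) (g + unit_vec (d, a))"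
    by (simp add: fun_eq_iff cscale_def mult.assoc[symmetric])
  also have "\<dots> \<in> cs.span (insert (unit_vec (d, a)) (Srel r G))"
    using \<open>g \<in> Srel r G\<close> by (intro cs.span_scale cs.span_add) (auto intro: cs.span_base)
  finally show ?thesis .
qed

end

context subgroup_with_ones
begin

lemma degree_support_vadd:
  assumes \<alpha>: "\<alpha> \<in> degree_support r G \<mu>" and h: "h \<in> Deltad r (fst \<mu>)"
  shows "vadd \<alpha> h \<in> degree_support r G \<mu>"
proof -
  have "h \<subseteq> fst \<mu>" "h \<subseteq> {..<2*r}"
    using h Deltad_subset Deltad_subset_CG[OF G_subset] CG_subset_Pow by blast+
  then have "vmul (dperp r (fst \<mu>)) (vadd \<alpha> h) = vmul (dperp r (fst \<mu>)) \<alpha>"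
    by (auto simp: vmul_def vadd_def dperp_def ones_def)
  then show ?thesis
    using \<alpha> h CG_vadd_Deltad by (auto simp: degree_support_def)
qed

lemma dimSG_eq_card_cosets: "dimSG r G \<mu> = card (cosets (Deltad r (fst \<mu>)) (degree_support r G \<mu>))"
proof -
  define d where "d = fst \<mu>"
  define I where "I = cosets (Deltad r d) (degree_support r G \<mu>)"
  define b where "b K = unit_vec (d, coset_rep K)" for K
  have F_CG: "degree_support r G \<mu> \<subseteq> CG r G"
    by (auto simp: degree_support_def)
  have I_cosets: "I \<subseteq> cosets (Deltad r d) (CG r G)"
    using F_CG by (auto simp: I_def cosets_def)
  have closed: "\<forall>\<alpha>\<in>degree_support r G \<mu>. \<forall>h\<in>Deltad r d. vadd \<alpha> h \<in> degree_support r G \<mu>"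
    using degree_support_vadd by (simp add: d_def)
  have rep_F: "coset_rep K \<in> degree_support r G \<mu>" if K: "K \<in> I" for K
    using coset_rep_in[OF is_subgroup_Deltad K[unfolded I_def]] coset_subset[OF closed K[unfolded I_def]]
    by blast
  have Shom: "Shom r G \<mu> = cs.span ((\<lambda>\<alpha>. unit_vec (d, \<alpha>)) ` degree_support r G \<mu>)"
    unfolding d_def by (rule Shom_eq_span)
  have unit_vec_in: "unit_vec (d, \<alpha>) \<in> cs.span (b ` I \<union> Srel r G)" if \<alpha>: "\<alpha> \<in> degree_support r G \<mu>" for \<alpha>
  proof -
    have d_\<alpha>: "d \<in> DG r G" "\<alpha> \<in> CG r G" and K: "vadd \<alpha> ` Deltad r d \<in> I"
      using \<alpha> by (auto simp: degree_support_def d_def I_def cosets_def)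
    from d_\<alpha> have "unit_vec (d, \<alpha>) \<in> cs.span (insert (b (vadd \<alpha> ` Deltad r d)) (Srel r G))"
      unfolding b_def by (rule unit_vec_in_span_coset_rep)
    moreover have "insert (b (vadd \<alpha> ` Deltad r d)) (Srel r G) \<subseteq> b ` I \<union> Srel r G"
      using K by blast
    ultimately show ?thesis
      using cs.span_mono by blast
  qed
  have span_eq: "cs.span (Shom r G \<mu> \<union> Srel r G) = cs.span (b ` I \<union> Srel r G)"
    unfolding cs.span_eq
  proof (intro conjI Un_least)
    show "Shom r G \<mu> \<subseteq> cs.span (b ` I \<union> Srel r G)"
      unfolding Shom using unit_vec_in by (intro cs.span_minimal[OF _ cs.subspace_span] image_subsetI)
    show "Srel r G \<subseteq> cs.span (b ` I \<union> Srel r G)" "Srel r G \<subseteq> cs.span (Shom r G \<mu> \<union> Srel r G)"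
      using cs.span_superset by blast+
    have "b ` I \<subseteq> Shom r G \<mu>"
      unfolding Shom b_def using rep_F by (intro image_subsetI cs.span_base imageI)
    then show "b ` I \<subseteq> cs.span (Shom r G \<mu> \<union> Srel r G)"
      using cs.span_superset by blast
  qed
  have "cs.dim (b ` I \<union> Srel r G) = card I + cs.dim (Srel r G)"
  proof (rule cs.dim_Un_biorthogonal)
    show "finite I"
      using finite_subset[OF F_CG finite_CG] by (simp add: I_def cosets_def)
    show "finite (unit_vec ` (DG r G \<times> CG r G))"
      using finite_DG finite_CG by simp
    show "Srel r G \<subseteq> cs.span (unit_vec ` (DG r G \<times> CG r G))"
      by (rule Srel_subset_span_unit_vec)
    show "coset_coeff r d K (f + g) = coset_coeff r d K f + coset_coeff r d K g" for K f g
      by (rule coset_coeff_add)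
    show "coset_coeff r d K (cscale c f) = c * coset_coeff r d K f" for K c f
      by (rule coset_coeff_cscale)
    show "coset_coeff r d K w = 0" if "K \<in> I" "w \<in> Srel r G" for K w
      using that I_cosets coset_coeff_Srel by blast
    show "coset_coeff r d K (b K') = (if K = K' then 1 else 0)" if "K \<in> I" "K' \<in> I" for K K'
      using that I_cosets coset_coeff_unit_vec unfolding b_def by blast
  qed
  then have "cs.dim (Shom r G \<mu> \<union> Srel r G) = card I + cs.dim (Srel r G)"
    using cs.span_eq_dim[OF span_eq] by simp
  then show ?thesis
    by (simp add: dimSG_def I_def d_def)
qed

lemma card_degree_support:
  assumes "fst \<mu> \<in> DG r G"
  shows "card (degree_support r G \<mu>)
    = 2 ^ wl r (fst \<mu>) * card (cosets (Deltad r (fst \<mu>)) (degree_support r G \<mu>))"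
proof -
  have fin: "finite (degree_support r G \<mu>)"
    using finite_CG finite_subset by (auto simp: degree_support_def)
  have closed: "\<forall>\<alpha>\<in>degree_support r G \<mu>. \<forall>h\<in>Deltad r (fst \<mu>). vadd \<alpha> h \<in> degree_support r G \<mu>"
    using degree_support_vadd by blast
  show ?thesis
    using card_eq_card_cosets[OF is_subgroup_Deltad fin closed] by (simp add: card_Deltad[OF assms])
qed

lemma dimSG_eq_card_degree_support: "real (dimSG r G \<mu>) = card (degree_support r G \<mu>) / 2 ^ wl r (fst \<mu>)"
proof (cases "fst \<mu> \<in> DG r G")
  case True
  then show ?thesis
    by (simp add: dimSG_eq_card_cosets card_degree_support)
next
  case False
  then have "degree_support r G \<mu> = {}"
    by (simp add: degree_support_def)
  then show ?thesis
    by (simp add: dimSG_eq_card_cosets cosets_def)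
qed

lemma sum_degree_indicator:
  "(\<Sum>d\<in>DG r G. \<Sum>\<alpha>\<in>CG r G. if (d, vmul (dperp r d) \<alpha>) = \<mu> then 1 / 2 ^ wl r d else 0)
    = card (degree_support r G \<mu>) / 2 ^ wl r (fst \<mu>)"
proof -
  have "(\<Sum>\<alpha>\<in>CG r G. if (d, vmul (dperp r d) \<alpha>) = \<mu> then 1 / 2 ^ wl r d else 0)
      = (if d = fst \<mu> then card (degree_support r G \<mu>) / 2 ^ wl r (fst \<mu>) else 0)"
    if "d \<in> DG r G" for d :: "nat set"
  proof -
    have "(\<Sum>\<alpha>\<in>CG r G. if (d, vmul (dperp r d) \<alpha>) = \<mu> then 1 / 2 ^ wl r d else 0)
        = (\<Sum>\<alpha>\<in>{\<alpha> \<in> CG r G. (d, vmul (dperp r d) \<alpha>) = \<mu>}. 1 / 2 ^ wl r d :: real)"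
      by (rule sum.inter_filter[symmetric]) (rule finite_CG)
    moreover have "{\<alpha> \<in> CG r G. (d, vmul (dperp r d) \<alpha>) = \<mu>}
        = (if d = fst \<mu> then degree_support r G \<mu> else {})"
      using that by (auto simp: degree_support_def)
    ultimately show ?thesis
      by simp
  qed
  then have "(\<Sum>d\<in>DG r G. \<Sum>\<alpha>\<in>CG r G. if (d, vmul (dperp r d) \<alpha>) = \<mu> then 1 / 2 ^ wl r d else 0)
      = (\<Sum>d\<in>DG r G. if d = fst \<mu> then card (degree_support r G \<mu>) / 2 ^ wl r (fst \<mu>) else 0)"
    by (rule sum.cong[OF refl])
  also have "\<dots> = card (degree_support r G \<mu>) / 2 ^ wl r (fst \<mu>)"
    using finite_DG by (simp add: sum.delta' degree_support_def)
  finally show ?thesis .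
qed

lemma card_degree_support_eq_card_CGd:
  assumes d: "d \<in> DG r G" and \<alpha>: "\<alpha> \<in> CG r G"
  shows "card (degree_support r G (d, vmul (dperp r d) \<alpha>)) = card (CGd r G d)"
proof -
  let ?F = "degree_support r G (d, vmul (dperp r d) \<alpha>)"
  have dperp_CG: "vmul (dperp r d) \<beta> = \<beta> - d" if "\<beta> \<in> CG r G" for \<beta>
    using that CG_subset_Pow by (intro vmul_dperp) blast
  have "?F = {\<beta> \<in> CG r G. vmul (dperp r d) \<beta> = vmul (dperp r d) \<alpha>}"
    using d by (simp add: degree_support_def)
  also have "\<dots> = {\<beta> \<in> CG r G. \<beta> - d = \<alpha> - d}"
  proof (rule Collect_cong)
    fix \<beta>
    show "(\<beta> \<in> CG r G \<and> vmul (dperp r d) \<beta> = vmul (dperp r d) \<alpha>) \<longleftrightarrow> (\<beta> \<in> CG r G \<and> \<beta> - d = \<alpha> - d)"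
      using dperp_CG[of \<beta>] dperp_CG[OF \<alpha>] by auto
  qed
  finally have F: "?F = {\<beta> \<in> CG r G. \<beta> - d = \<alpha> - d}" .
  have CGd: "CGd r G d = {x \<in> CG r G. x \<subseteq> d}"
    using CG_subset_Pow by (auto simp: CGd_def Z2sub_def Z2_def vmul_def)
  have "vadd \<alpha> ` ?F = CGd r G d"
  proof (intro equalityI subsetI)
    fix x assume "x \<in> vadd \<alpha> ` ?F"
    then obtain \<beta> where "\<beta> \<in> CG r G" "\<beta> - d = \<alpha> - d" "x = vadd \<alpha> \<beta>"
      using F by blast
    then show "x \<in> CGd r G d"
      unfolding CGd using CG_vadd[OF \<alpha>] by (auto simp: vadd_def)
  next
    fix x assume "x \<in> CGd r G d"
    then have "vadd \<alpha> x \<in> ?F"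
      unfolding CGd F using CG_vadd[OF \<alpha>] by (auto simp: vadd_def)
    then show "x \<in> vadd \<alpha> ` ?F"
      by (metis image_eqI vadd_vadd_cancel)
  qed
  moreover have "card (vadd \<alpha> ` ?F) = card ?F"
    by (rule card_image[OF inj_on_vadd])
  ultimately show ?thesis
    by simp
qed

lemma card_CGd:
  assumes "d \<in> DG r G"
  shows "card (CGd r G d) = 2 ^ wl r d * card (cosets (Deltad r d) (CGd r G d))"
proof -
  have fin: "finite (CGd r G d)"
    using finite_CG by (simp add: CGd_def)
  have closed: "\<forall>\<beta>\<in>CGd r G d. \<forall>h\<in>Deltad r d. vadd \<beta> h \<in> CGd r G d"
    using CG_vadd_Deltad Z2sub_vadd by (auto simp: CGd_def Deltad_def)
  show ?thesis
    using card_eq_card_cosets[OF is_subgroup_Deltad fin closed] by (simp add: card_Deltad[OF assms])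
qed

lemma dimSG_eq_card_cosets_CGd:
  assumes "d \<in> DG r G" "\<alpha> \<in> CG r G"
  shows "dimSG r G (d, vmul (dperp r d) \<alpha>) = card (cosets (Deltad r d) (CGd r G d))"
  using dimSG_eq_card_cosets[of "(d, vmul (dperp r d) \<alpha>)"] card_degree_support[of "(d, vmul (dperp r d) \<alpha>)"]
    card_degree_support_eq_card_CGd[OF assms] card_CGd[OF assms(1)] assms(1)
  by simp

end

theorem mainTheorem14:
  fixes r :: nat and G :: "nat set set"
  assumes "r \<ge> 1"
    and "is_subgroup_Z2 r G"
    and "ones r \<in> G"
  shows "(\<forall>\<mu>\<in>ISrr r. real (dimSG r G \<mu>) =
            (\<Sum>d\<in>DG r G. \<Sum>\<alpha>\<in>CG r G.
               if (d, vmul (dperp r d) \<alpha>) = \<mu> then 1 / 2 ^ wl r d else 0))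
       \<and> (\<forall>d\<in>DG r G. \<forall>\<alpha>\<in>CG r G.
            dimSG r G (d, vmul (dperp r d) \<alpha>)
              = card ((\<lambda>\<beta>. vadd \<beta> ` Deltad r d) ` CGd r G d)
            \<and> real (dimSG r G (d, vmul (dperp r d) \<alpha>))
              = real (card (CGd r G d)) / 2 ^ wl r d)"
proof -
  interpret subgroup_with_ones r G
    using assms by unfold_locales
  show ?thesis
  proof (intro conjI ballI)
    fix \<mu>
    show "real (dimSG r G \<mu>) = (\<Sum>d\<in>DG r G. \<Sum>\<alpha>\<in>CG r G.
        if (d, vmul (dperp r d) \<alpha>) = \<mu> then 1 / 2 ^ wl r d else 0)"
      using dimSG_eq_card_degree_support sum_degree_indicator by simp
  next
    fix d \<alpha> assume "d \<in> DG r G" "\<alpha> \<in> CG r G"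
    then show "dimSG r G (d, vmul (dperp r d) \<alpha>) = card ((\<lambda>\<beta>. vadd \<beta> ` Deltad r d) ` CGd r G d)"
      and "real (dimSG r G (d, vmul (dperp r d) \<alpha>)) = real (card (CGd r G d)) / 2 ^ wl r d"
      using dimSG_eq_card_cosets_CGd dimSG_eq_card_degree_support[of "(d, vmul (dperp r d) \<alpha>)"]
        card_degree_support_eq_card_CGd
      by (simp_all add: cosets_def)
  qed
qed

end
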